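(* Let $0\leq B<1$, $q\geq3$, $\Delta\geq3$, and $d=\Delta-1$. If $B\geq\frac{\Delta-q}{\Delta}$, then every positive solution $R_1,\dots,R_q,C_1,\dots,C_q>0$ of the system \[R_i\propto\Big(BC_i+\sum_{j\neq i}C_j\Big)^{d},\qquad C_j\propto\Big(BR_j+\sum_{i\neq j}R_i\Big)^{d}\qquad(i,j\in[q])\] (proportionality constants independent of $i$, resp. $j$) satisfies $R_1=\dots=R_q$ and $C_1=\dots=C_q$.
   Context: This system is the tree recursion (fixpoint) system for the antiferromagnetic $q$-state Potts model with parameter $B$ on the $\Delta$-regular tree; $B=0$ corresponds to $q$-colorings. *)

theory Defs
  imports "HOL-Analysis.Analysis"
begin

end

theory Submission
  imports Defs
begin

text \<open>Write \<open>b = 1 - B\<close>, \<open>d = \<Delta> - 1\<close>, \<open>S\<^sub>R = \<Sum>R\<^sub>i\<close>, \<open>S\<^sub>C = \<Sum>C\<^sub>i\<close> and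
  \<open>u\<^sub>i = S\<^sub>C - b C\<^sub>i\<close>. The system says \<open>R\<^sub>i = \<lambda> u\<^sub>i\<^sup>d\<close> and
  \<open>C\<^sub>i = \<mu> (S\<^sub>R - b R\<^sub>i)\<^sup>d\<close>, so every \<open>u\<^sub>i\<close> solves \<open>g u = S\<^sub>C\<close> for
  \<open>g u = u + b \<mu> (S\<^sub>R - b \<lambda> u\<^sup>d)\<^sup>d\<close>. The power-mean inequality, applied to the
  \<open>u\<^sub>i\<close> and to the \<open>S\<^sub>R - b R\<^sub>i\<close>, together with \<open>b (d + 1) \<le> q\<close> (the hypothesis on
  \<open>B\<close>) bounds \<open>\<lambda> \<mu>\<^sup>d\<close> so strongly that AM-GM gives \<open>g' \<ge> 0\<close>, with \<open>g'\<close> vanishing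
  at a single point. Hence \<open>g\<close> is strictly increasing where it matters, all \<open>u\<^sub>i\<close>
  coincide, and with them all \<open>R\<^sub>i\<close> and all \<open>C\<^sub>i\<close>.\<close>

lemma Bernoulli_inequality_strict:
  fixes x :: real and n :: nat
  assumes "-1 \<le> x" "x \<noteq> 0" "2 \<le> n"
  shows "1 + real n * x < (1 + x) ^ n"
  using assms(3)
proof (induction n rule: dec_induct)
  case base
  have "0 < x\<^sup>2" using assms(2) by simp
  then show ?case by (simp add: power2_eq_square algebra_simps)
next
  case (step n)
  have "0 < real n * x\<^sup>2" using assms(2) step(1) by simp
  then have "1 + real (Suc n) * x < (1 + x) * (1 + real n * x)"
    by (simp add: power2_eq_square algebra_simps)
  also have "\<dots> \<le> (1 + x) ^ Suc n"
    using step(3) assms(1) by (simp add: mult_left_mono)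
  finally show ?case .
qed

lemma am_gm_weighted_less:
  fixes a c :: real
  assumes "0 \<le> a" "0 < c" "1 \<le> n" "a \<noteq> c"
  shows "a * c ^ n < ((a + real n * c) / (real n + 1)) ^ (n + 1)"
proof -
  define w where "w = (a / c - 1) / (real n + 1)"
  have w_scaled: "real (n + 1) * w = a / c - 1" by (simp add: w_def add.commute)
  have "0 \<le> a / c" using assms(1,2) by simp
  then have "-1 * (real n + 1) \<le> a / c - 1" by simp
  then have "-1 \<le> w" unfolding w_def by (subst pos_le_divide_eq) auto
  moreover have "w \<noteq> 0" using assms(2,4) by (simp add: w_def)
  ultimately have "1 + real (n + 1) * w < (1 + w) ^ (n + 1)"
    using assms(3) by (intro Bernoulli_inequality_strict) auto
  then have less: "c ^ (n + 1) * (1 + real (n + 1) * w) < (c * (1 + w)) ^ (n + 1)"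
    using assms(2) by (simp add: power_mult_distrib)
  have lhs: "c ^ (n + 1) * (1 + real (n + 1) * w) = a * c ^ n"
    using assms(2) unfolding w_scaled by (simp add: field_simps)
  have "c * (a / c - 1) = a - c" using assms(2) by (simp add: right_diff_distrib)
  then have "c * (1 + w) = c + (a - c) / (real n + 1)" by (simp add: w_def distrib_left)
  also have "\<dots> = ((real n + 1) * c + (a - c)) / (real n + 1)"
    by (simp add: add_divide_distrib)
  also have "\<dots> = (a + real n * c) / (real n + 1)" by (simp add: algebra_simps)
  finally have mean: "c * (1 + w) = (a + real n * c) / (real n + 1)" .
  show ?thesis using less unfolding lhs mean .
qed

lemma am_gm_weighted:
  fixes a c :: real
  assumes "0 \<le> a" "0 < c" "1 \<le> n"
  shows "a * c ^ n \<le> ((a + real n * c) / (real n + 1)) ^ (n + 1)"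
proof (cases "a = c")
  case True
  then have "(a + real n * c) / (real n + 1) = c" by (simp add: field_simps)
  then show ?thesis using True by simp
qed (use am_gm_weighted_less[OF assms] in auto)

lemma convex_on_nonneg_power: "convex_on {0::real..} (\<lambda>x. x ^ n)"
proof (cases "even n")
  case True
  then show ?thesis by (intro convex_on_subset[OF convex_power_even]) auto
qed (use convex_power_odd in auto)

lemma power_mean_le:
  fixes x :: "'a \<Rightarrow> real"
  assumes "finite I" "I \<noteq> {}" "\<And>i. i \<in> I \<Longrightarrow> 0 \<le> x i"
  shows "real (card I) * ((\<Sum>i\<in>I. x i) / real (card I)) ^ n \<le> (\<Sum>i\<in>I. x i ^ n)"
proof -
  have card: "0 < real (card I)" using assms by (simp add: card_gt_0_iff)
  have "(\<Sum>i\<in>I. (1 / real (card I)) *\<^sub>R x i) ^ n \<le> (\<Sum>i\<in>I. 1 / real (card I) * x i ^ n)"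
    using assms card by (intro convex_on_sum[OF _ _ convex_on_nonneg_power, where y = x]) auto
  then have "((\<Sum>i\<in>I. x i) / real (card I)) ^ n \<le> (\<Sum>i\<in>I. x i ^ n) / real (card I)"
    by (simp add: sum_divide_distrib[symmetric] scaleR_conv_of_real)
  then show ?thesis
    using card by (simp add: pos_le_divide_eq mult.commute)
qed

lemma DERIV_nonneg_isolated_zero_imp_less:
  fixes f f' :: "real \<Rightarrow> real"
  assumes "a < c"
    and deriv: "\<And>z. a \<le> z \<Longrightarrow> z \<le> c \<Longrightarrow> (f has_real_derivative f' z) (at z)"
    and nonneg: "\<And>z. a < z \<Longrightarrow> z < c \<Longrightarrow> 0 \<le> f' z"
    and zero_unique: "\<And>z w. a < z \<Longrightarrow> z < w \<Longrightarrow> w < c \<Longrightarrow> f' z = 0 \<Longrightarrow> f' w = 0 \<Longrightarrow> False"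
  shows "f a < f c"
proof -
  define m where "m = (a + c) / 2"
  have m: "a < m" "m < c" using \<open>a < c\<close> by (auto simp: m_def)
  obtain z where z: "a < z" "z < m" "f m - f a = (m - a) * f' z"
    using MVT2[OF m(1), of f f'] deriv m by force
  obtain w where w: "m < w" "w < c" "f c - f m = (c - m) * f' w"
    using MVT2[OF m(2), of f f'] deriv m by force
  have "0 \<le> f' z" "0 \<le> f' w" using z w m by (auto intro: nonneg)
  moreover have "f' z \<noteq> 0 \<or> f' w \<noteq> 0" using zero_unique z w m by force
  ultimately have "0 < (m - a) * f' z + (c - m) * f' w" using m
    by (auto simp: add_pos_nonneg add_nonneg_pos)
  then show ?thesis using z(3) w(3) by linarith
qed

lemma fixpoint_slope_pow_eq:
  fixes b lam mu u V :: real and d :: nat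
  assumes "1 \<le> d"
  shows "(lam * mu * (b * d)\<^sup>2 * (u * V) ^ (d - 1)) ^ d
       = lam * mu ^ d * (b * d) ^ (d + 1) * (b * d * lam * u ^ d * V ^ d) ^ (d - 1)"
proof -
  obtain n where n: "d = Suc n" using assms by (cases d) auto
  have "((u * V) ^ n) ^ Suc n = (u ^ Suc n * V ^ Suc n) ^ n"
    by (metis power_mult mult.commute power_mult_distrib)
  then have "(lam * mu * B\<^sup>2 * (u * V) ^ n) ^ Suc n
      = lam * mu ^ Suc n * B ^ (Suc n + 1) * (B * lam * u ^ Suc n * V ^ Suc n) ^ n" for B
    by (simp add: power_mult_distrib power_add power_mult[symmetric] mult_ac numeral_2_eq_2)
  from this[of "b * d"] show ?thesis
    unfolding n diff_Suc_1 .
qed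

lemma fixpoint_constant_eq:
  fixes k c S :: real and d :: nat
  assumes "1 \<le> d"
  shows "k * ((c * S) ^ (d + 1)) ^ (d - 1) * S = k * (c ^ (d - 1)) ^ (d + 1) * S ^ (d * d)"
proof -
  obtain n where n: "d = Suc n" using assms by (cases d) auto
  have "Suc n * Suc n = (Suc n + 1) * n + 1" by simp
  then have S_pow: "S ^ (Suc n * Suc n) = S ^ ((Suc n + 1) * n) * S"
    by (simp only: power_add power_one_right)
  have c_pow: "c ^ (n * (Suc n + 1)) = c ^ ((Suc n + 1) * n)"
    by (simp only: mult.commute)
  show ?thesis
    unfolding n diff_Suc_1
    by (simp only: S_pow c_pow power_mult[symmetric] power_mult_distrib mult.assoc)
qed

text \<open>One minus the left-hand side below is the derivative of
  \<open>u \<mapsto> u + b \<mu> (S - b \<lambda> u\<^sup>d)\<^sup>d\<close>; AM-GM applied to \<open>b d \<lambda> u\<^sup>d\<close> and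
  \<open>S - b \<lambda> u\<^sup>d\<close> bounds its \<open>d\<close>-th power, with equality only at \<open>b (d + 1) \<lambda> u\<^sup>d = S\<close>.\<close>
lemma fixpoint_slope_bound:
  fixes b lam mu S u :: real and d :: nat
  assumes d: "2 \<le> d" and pos: "0 < b" "0 < lam" "0 < mu" "0 < u"
    and W: "0 < S - b * lam * u ^ d"
    and H: "lam * mu ^ d * (b * d * (d / (d + 1)) ^ (d - 1)) ^ (d + 1) * S ^ (d * d) \<le> S"
  shows "lam * mu * (b * d)\<^sup>2 * (u * (S - b * lam * u ^ d)) ^ (d - 1) \<le> 1"
    and "b * (d + 1) * lam * u ^ d \<noteq> S \<Longrightarrow>
           lam * mu * (b * d)\<^sup>2 * (u * (S - b * lam * u ^ d)) ^ (d - 1) < 1"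
proof -
  define V where "V = S - b * lam * u ^ d"
  define t where "t = b * d * lam * u ^ d"
  define P where "P = (d / (d + 1) * S) ^ (d + 1)"
  define X where "X = lam * mu * (b * d)\<^sup>2 * (u * V) ^ (d - 1)"
  define k where "k = lam * mu ^ d * (b * d) ^ (d + 1)"
  have V: "0 < V" using W by (simp add: V_def)
  have t: "0 < t" using pos d by (simp add: t_def)
  have k: "0 < k" using pos d by (simp add: k_def)
  have X: "0 \<le> X" using pos V by (simp add: X_def)
  have "0 < b * lam * u ^ d" using pos by simp
  then have S: "0 < S" using W by linarith
  have mean: "(t + real d * V) / (real d + 1) = d / (d + 1) * S"
    by (simp add: t_def V_def algebra_simps)
  have X_pow: "X ^ d = k * (t * V ^ d) ^ (d - 1)"
    unfolding X_def k_def t_def using d by (intro fixpoint_slope_pow_eq) simp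
  have "k * P ^ (d - 1) * S = k * ((d / (d + 1)) ^ (d - 1)) ^ (d + 1) * S ^ (d * d)"
    unfolding P_def using d by (intro fixpoint_constant_eq) simp
  also have "\<dots> = lam * mu ^ d * (b * d * (d / (d + 1)) ^ (d - 1)) ^ (d + 1) * S ^ (d * d)"
    by (simp only: k_def power_mult_distrib mult.assoc)
  finally have "k * P ^ (d - 1) * S \<le> 1 * S"
    using H by simp
  then have bound: "k * P ^ (d - 1) \<le> 1"
    using S by (rule mult_right_le_imp_le)
  have "t * V ^ d \<le> P"
    using am_gm_weighted[of t V d] t V d mean by (simp add: P_def)
  then have "k * (t * V ^ d) ^ (d - 1) \<le> k * P ^ (d - 1)"
    using k t V by (intro mult_left_mono power_mono) auto
  then have "X ^ d \<le> 1" using X_pow bound by linarith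
  then show "lam * mu * (b * d)\<^sup>2 * (u * (S - b * lam * u ^ d)) ^ (d - 1) \<le> 1"
    using X d by (simp add: power_le_one_iff X_def V_def)
  assume "b * (d + 1) * lam * u ^ d \<noteq> S"
  then have "t \<noteq> V" by (simp add: t_def V_def algebra_simps)
  then have "t * V ^ d < P"
    using am_gm_weighted_less[of t V d] t V d mean by (simp add: P_def)
  then have "k * (t * V ^ d) ^ (d - 1) < k * P ^ (d - 1)"
    using k t V d by (intro mult_strict_left_mono power_strict_mono) auto
  then have "X ^ d < 1" using X_pow bound by linarith
  then show "lam * mu * (b * d)\<^sup>2 * (u * (S - b * lam * u ^ d)) ^ (d - 1) < 1"
    using X d by (simp add: power_less_one_iff X_def V_def)
qed

lemma fixpoint_map_strict_mono:
  fixes b lam mu S u v :: real and d :: nat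
  assumes d: "2 \<le> d" and pos: "0 < b" "0 < lam" "0 < mu"
    and H: "lam * mu ^ d * (b * d * (d / (d + 1)) ^ (d - 1)) ^ (d + 1) * S ^ (d * d) \<le> S"
    and uv: "0 < u" "u < v" and W: "0 < S - b * lam * v ^ d"
  shows "u + b * mu * (S - b * lam * u ^ d) ^ d < v + b * mu * (S - b * lam * v ^ d) ^ d"
proof (rule DERIV_nonneg_isolated_zero_imp_less[OF uv(2),
    where f' = "\<lambda>z. 1 - lam * mu * (b * d)\<^sup>2 * (z * (S - b * lam * z ^ d)) ^ (d - 1)"])
  have domain: "0 < z \<and> 0 < S - b * lam * z ^ d" if "u \<le> z" "z \<le> v" for z
  proof -
    have "z ^ d \<le> v ^ d" using that uv by (intro power_mono) auto
    then have "b * lam * z ^ d \<le> b * lam * v ^ d" using pos by (intro mult_left_mono) auto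
    then show ?thesis using that uv W by linarith
  qed
  show "((\<lambda>t. t + b * mu * (S - b * lam * t ^ d) ^ d) has_real_derivative
        1 - lam * mu * (b * d)\<^sup>2 * (z * (S - b * lam * z ^ d)) ^ (d - 1)) (at z)" for z
  proof -
    have "((\<lambda>t. t + b * mu * (S - b * lam * t ^ d) ^ d) has_real_derivative
          1 - b\<^sup>2 * d\<^sup>2 * lam * mu * z ^ (d - 1) * (S - b * lam * z ^ d) ^ (d - 1)) (at z)"
      by (auto intro!: derivative_eq_intros simp: power2_eq_square algebra_simps)
    then show ?thesis by (simp add: power_mult_distrib power2_eq_square mult_ac)
  qed
  show "0 \<le> 1 - lam * mu * (b * d)\<^sup>2 * (z * (S - b * lam * z ^ d)) ^ (d - 1)"
    if "u < z" "z < v" for z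
    using fixpoint_slope_bound(1)[OF d pos _ _ H] domain that by simp
  have critical: "b * (d + 1) * lam * z ^ d = S"
    if "u < z" "z < v" "1 - lam * mu * (b * d)\<^sup>2 * (z * (S - b * lam * z ^ d)) ^ (d - 1) = 0" for z
  proof (rule ccontr)
    assume "b * (d + 1) * lam * z ^ d \<noteq> S"
    moreover have "0 < z" "0 < S - b * lam * z ^ d" using domain that by auto
    ultimately have "lam * mu * (b * d)\<^sup>2 * (z * (S - b * lam * z ^ d)) ^ (d - 1) < 1"
      using fixpoint_slope_bound(2)[OF d pos _ _ H] by blast
    then show False using that(3) by simp
  qed
  show False if "u < z" "z < w" "w < v"
    "1 - lam * mu * (b * d)\<^sup>2 * (z * (S - b * lam * z ^ d)) ^ (d - 1) = 0"
    "1 - lam * mu * (b * d)\<^sup>2 * (w * (S - b * lam * w ^ d)) ^ (d - 1) = 0" for z w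
  proof -
    have "b * (d + 1) * lam * z ^ d = b * (d + 1) * lam * w ^ d"
      using critical that by (metis order.strict_trans)
    then have "z ^ d = w ^ d" using pos by simp
    moreover have "z ^ d < w ^ d" using that uv d by (intro power_strict_mono) auto
    ultimately show False by simp
  qed
qed

lemma power_mean_complement_le:
  fixes x y :: "nat \<Rightarrow> real" and b c :: real
  assumes "0 < q" "0 \<le> c"
    and nonneg: "\<forall>i<q. 0 \<le> (\<Sum>j<q. x j) - b * x i"
    and y: "\<forall>i<q. y i = c * ((\<Sum>j<q. x j) - b * x i) ^ d"
  shows "c * (q * ((q - b) / q) ^ d) * (\<Sum>j<q. x j) ^ d \<le> (\<Sum>i<q. y i)"
proof -
  define S where "S = (\<Sum>j<q. x j)"
  have "(\<Sum>i<q. S - b * x i) / q = (q - b) / q * S"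
    using assms(1) by (simp add: S_def sum_subtractf sum_distrib_left[symmetric] field_simps)
  moreover have "real (card {..<q}) * ((\<Sum>i<q. S - b * x i) / real (card {..<q})) ^ d
      \<le> (\<Sum>i<q. (S - b * x i) ^ d)"
    using assms(1) nonneg by (intro power_mean_le) (auto simp: S_def)
  ultimately have "q * ((q - b) / q * S) ^ d \<le> (\<Sum>i<q. (S - b * x i) ^ d)"
    using assms(1) by simp
  then have "c * (q * ((q - b) / q * S) ^ d) \<le> c * (\<Sum>i<q. (S - b * x i) ^ d)"
    using assms(2) by (rule mult_left_mono)
  also have "\<dots> = (\<Sum>i<q. y i)"
    using y by (simp add: S_def sum_distrib_left)
  finally show ?thesis
    unfolding S_def[symmetric] power_mult_distrib by (simp add: mult_ac)
qed

text \<open>The hypothesis on \<open>B\<close> enters only here, as \<open>b (d + 1) \<le> q\<close> for \<open>b = 1 - B\<close>.\<close>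
lemma slope_constant_le_mean_constant:
  fixes b q :: real and d :: nat
  assumes "1 \<le> d" "0 < b" "b * (d + 1) \<le> q"
  shows "b * d * (d / (d + 1)) ^ (d - 1) \<le> q * ((q - b) / q) ^ d"
proof -
  have "0 < b * (d + 1)" using assms(2) by simp
  then have q: "0 < q" using assms(3) by linarith
  have "d / (d + 1) \<le> (q - b) / q"
    using assms(3) q by (simp add: divide_simps algebra_simps)
  moreover have "0 \<le> b * d" "b * d \<le> q - b" using assms(2,3) by (simp_all add: algebra_simps)
  ultimately have "b * d * (d / (d + 1)) ^ (d - 1) \<le> (q - b) * ((q - b) / q) ^ (d - 1)"
    by (intro mult_mono power_mono) auto
  also have "\<dots> = q * ((q - b) / q) ^ d"
    using assms(1) q by (cases d) (auto simp: field_simps)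
  finally show ?thesis .
qed

lemma fixpoint_power_mean_bound:
  fixes b lam mu :: real and d q :: nat and R C :: "nat \<Rightarrow> real"
  assumes d: "2 \<le> d" and b: "0 < b" "b * (d + 1) \<le> q" and pos: "0 < lam" "0 < mu"
    and C_compl: "\<forall>i<q. 0 < (\<Sum>j<q. C j) - b * C i"
    and R_compl: "\<forall>i<q. 0 < (\<Sum>j<q. R j) - b * R i"
    and R: "\<forall>i<q. R i = lam * ((\<Sum>j<q. C j) - b * C i) ^ d"
    and C: "\<forall>i<q. C i = mu * ((\<Sum>j<q. R j) - b * R i) ^ d"
  shows "lam * mu ^ d * (b * d * (d / (d + 1)) ^ (d - 1)) ^ (d + 1) * (\<Sum>j<q. R j) ^ (d * d)
           \<le> (\<Sum>j<q. R j)"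
proof -
  define SR SC where "SR = (\<Sum>j<q. R j)" and "SC = (\<Sum>j<q. C j)"
  define M where "M = q * ((q - b) / q) ^ d"
  define K where "K = b * d * (d / (d + 1)) ^ (d - 1)"
  have "0 < b * d" using b d by simp
  then have q: "0 < q" using b by (auto simp: algebra_simps)
  have "0 \<le> R i" if "i < q" for i
  proof -
    have "0 < (\<Sum>j<q. C j) - b * C i" using C_compl that by simp
    then show ?thesis using R pos that by simp
  qed
  then have SR: "0 \<le> SR"
    unfolding SR_def by (intro sum_nonneg) auto
  have K: "0 \<le> K" "K \<le> M"
    using b d slope_constant_le_mean_constant[of d b q] by (auto simp: K_def M_def)
  have mean_R: "lam * M * SC ^ d \<le> SR"
    unfolding M_def SC_def SR_def using q pos C_compl R
    by (intro power_mean_complement_le) (auto simp: less_imp_le)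
  have mean_C: "mu * M * SR ^ d \<le> SC"
    unfolding M_def SC_def SR_def using q pos R_compl C
    by (intro power_mean_complement_le) (auto simp: less_imp_le)
  have "lam * mu ^ d * K ^ (d + 1) * SR ^ (d * d) \<le> lam * mu ^ d * M ^ (d + 1) * SR ^ (d * d)"
    using K pos SR by (intro mult_right_mono mult_left_mono power_mono) auto
  also have "\<dots> = lam * M * (mu * M * SR ^ d) ^ d"
    by (simp only: power_mult_distrib power_mult power_add power_one_right mult_ac)
  also have "\<dots> \<le> lam * M * SC ^ d"
    using mean_C pos K SR by (intro mult_left_mono power_mono) auto
  finally show ?thesis
    using mean_R unfolding K_def SR_def by linarith
qed

theorem fixpoint_solution_constant:
  fixes b lam mu :: real and d q :: nat and R C :: "nat \<Rightarrow> real"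
  assumes d: "2 \<le> d" and b: "0 < b" "b * (d + 1) \<le> q" and pos: "0 < lam" "0 < mu"
    and C_compl: "\<forall>i<q. 0 < (\<Sum>j<q. C j) - b * C i"
    and R_compl: "\<forall>i<q. 0 < (\<Sum>j<q. R j) - b * R i"
    and R: "\<forall>i<q. R i = lam * ((\<Sum>j<q. C j) - b * C i) ^ d"
    and C: "\<forall>i<q. C i = mu * ((\<Sum>j<q. R j) - b * R i) ^ d"
  shows "\<forall>i<q. \<forall>k<q. R i = R k \<and> C i = C k"
proof -
  define SR SC where "SR = (\<Sum>j<q. R j)" and "SC = (\<Sum>j<q. C j)"
  define u where "u i = SC - b * C i" for i
  have H: "lam * mu ^ d * (b * d * (d / (d + 1)) ^ (d - 1)) ^ (d + 1) * SR ^ (d * d) \<le> SR"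
    unfolding SR_def by (rule fixpoint_power_mean_bound[OF assms])
  have u_pos: "0 < u i" if "i < q" for i
    using C_compl that by (simp add: u_def SC_def)
  have R_u: "R i = lam * u i ^ d" if "i < q" for i
    using R that by (simp add: u_def SC_def)
  have fixpoint: "u i + b * mu * (SR - b * lam * u i ^ d) ^ d = SC" if "i < q" for i
  proof -
    have "C i = mu * (SR - b * R i) ^ d"
      using C that by (simp add: SR_def)
    then have "C i = mu * (SR - b * lam * u i ^ d) ^ d"
      using R_u that by (simp add: mult.assoc)
    then show ?thesis by (simp add: u_def algebra_simps)
  qed
  have "\<not> u i < u k" if "i < q" "k < q" for i k
  proof
    assume less: "u i < u k"
    have "0 < SR - b * lam * u k ^ d"
      using that R_compl R_u by (simp add: SR_def mult.assoc)
    with less have "u i + b * mu * (SR - b * lam * u i ^ d) ^ d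
        < u k + b * mu * (SR - b * lam * u k ^ d) ^ d"
      using fixpoint_map_strict_mono[OF d b(1) pos H u_pos[OF that(1)]] by blast
    then show False using fixpoint[OF that(1)] fixpoint[OF that(2)] by simp
  qed
  then have u: "u i = u k" if "i < q" "k < q" for i k
    using that by (meson linorder_neqE)
  show ?thesis
  proof (intro allI impI conjI)
    fix i k assume ik: "i < q" "k < q"
    show "R i = R k" using R_u[OF ik(1)] R_u[OF ik(2)] u[OF ik] by simp
    show "C i = C k" using u[OF ik] b(1) by (simp add: u_def)
  qed
qed

lemma sum_except_eq:
  fixes f :: "nat \<Rightarrow> real"
  assumes "i < q"
  shows "B * f i + (\<Sum>j\<in>{0..<q} - {i}. f j) = (\<Sum>j<q. f j) - (1 - B) * f i"
  using sum.remove[of "{..<q}" i f] assms by (simp add: atLeast0LessThan algebra_simps)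

lemma sum_except_pos:
  fixes f :: "nat \<Rightarrow> real"
  assumes "\<forall>j<q. 0 < f j" "2 \<le> q" "i < q" "0 \<le> B"
  shows "0 < B * f i + (\<Sum>j\<in>{0..<q} - {i}. f j)"
proof -
  have "(if i = 0 then 1 else 0) \<in> {0..<q} - {i}" using assms(2,3) by auto
  then have "0 < (\<Sum>j\<in>{0..<q} - {i}. f j)" using assms(1) by (intro sum_pos) auto
  moreover have "0 \<le> B * f i" using assms by (simp add: less_imp_le)
  ultimately show ?thesis by simp
qed

lemma potts_recursion_normal_form:
  fixes f g :: "nat \<Rightarrow> real"
  assumes f: "\<forall>i<q. f i = lam * (B * g i + (\<Sum>j\<in>{0..<q} - {i}. g j)) ^ d"
    and pos: "\<forall>i<q. 0 < f i" "\<forall>j<q. 0 < g j" and q: "2 \<le> q" and B: "0 \<le> B"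
  shows "\<forall>i<q. 0 < (\<Sum>j<q. g j) - (1 - B) * g i"
    and "\<forall>i<q. f i = lam * ((\<Sum>j<q. g j) - (1 - B) * g i) ^ d"
    and "0 < lam"
proof -
  show compl: "\<forall>i<q. 0 < (\<Sum>j<q. g j) - (1 - B) * g i"
  proof (intro allI impI)
    fix i assume "i < q"
    then show "0 < (\<Sum>j<q. g j) - (1 - B) * g i"
      using sum_except_pos[OF pos(2) q \<open>i < q\<close> B] sum_except_eq[of i q B g]
      by linarith
  qed
  show f': "\<forall>i<q. f i = lam * ((\<Sum>j<q. g j) - (1 - B) * g i) ^ d"
    using f sum_except_eq[of _ q B g] by simp
  have "0 < lam * ((\<Sum>j<q. g j) - (1 - B) * g 0) ^ d"
    using f' pos(1) q by auto
  moreover have "0 < ((\<Sum>j<q. g j) - (1 - B) * g 0) ^ d"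
    using compl q by simp
  ultimately show "0 < lam" by (metis zero_less_mult_pos2)
qed

theorem lemma26:
  fixes B :: real and q \<Delta> :: nat and R C :: "nat \<Rightarrow> real"
  assumes "0 \<le> B" and "B < 1" and "q \<ge> 3" and "\<Delta> \<ge> 3"
    and "B \<ge> (real \<Delta> - real q) / real \<Delta>"
    and "\<forall>i<q. R i > 0" and "\<forall>j<q. C j > 0"
    and "\<exists>lam::real. \<forall>i<q.
           R i = lam * (B * C i + (\<Sum>j\<in>({0..<q} - {i}). C j)) ^ (\<Delta> - 1)"
    and "\<exists>mu::real. \<forall>j<q.
           C j = mu * (B * R j + (\<Sum>i\<in>({0..<q} - {j}). R i)) ^ (\<Delta> - 1)"
  shows "(\<forall>i<q. \<forall>j<q. R i = R j) \<and> (\<forall>i<q. \<forall>j<q. C i = C j)"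
proof -
  obtain lam mu where
    lam: "\<forall>i<q. R i = lam * (B * C i + (\<Sum>j\<in>({0..<q} - {i}). C j)) ^ (\<Delta> - 1)" and
    mu: "\<forall>j<q. C j = mu * (B * R j + (\<Sum>i\<in>({0..<q} - {j}). R i)) ^ (\<Delta> - 1)"
    using assms(8,9) by blast
  have q: "2 \<le> q" using assms(3) by simp
  note R_form = potts_recursion_normal_form[OF lam assms(6,7) q assms(1)]
  note C_form = potts_recursion_normal_form[OF mu assms(7,6) q assms(1)]
  have d: "2 \<le> \<Delta> - 1" using assms(4) by simp
  have b: "0 < 1 - B" using assms(2) by simp
  have "real \<Delta> - real q \<le> B * real \<Delta>"
    using assms(4,5) by (simp add: pos_divide_le_eq)
  moreover have "\<Delta> - 1 + 1 = \<Delta>" using assms(4) by simp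
  ultimately have bq: "(1 - B) * real (\<Delta> - 1 + 1) \<le> q"
    by (simp add: algebra_simps)
  have "\<forall>i<q. \<forall>k<q. R i = R k \<and> C i = C k"
    by (rule fixpoint_solution_constant[OF d b bq R_form(3) C_form(3) R_form(1) C_form(1)
        R_form(2) C_form(2)])
  then show ?thesis by blast
qed

end
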